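(* Let $G=(V,E)$ be a connected graph, let $(C,+)$ be an Abelian group, and let $c\colon V\to C$ be a distinguishing vertex colouring. Let $c'$ be the canonical edge colouring $c'(uv)=c(u)+c(v)$. If $\gamma$ is a non-trivial automorphism of $G$ preserving $c'$, then $c(\gamma(v))\neq c(v)$ for every vertex $v\in V$. In particular, such $\gamma$ fixes no vertex.
   Context: Graphs are simple and may be infinite. An automorphism $\gamma$ preserves a vertex colouring $c$ if $c\circ\gamma=c$, and preserves an edge colouring $c'$ if $c'(\gamma(u)\gamma(v))=c'(uv)$ for all edges $uv$. A colouring is distinguishing if only the identity automorphism preserves it. *)

theory Defs
  imports Main
begin

definition simple_graph :: "'a set \<Rightarrow> ('a \<Rightarrow> 'a \<Rightarrow> bool) \<Rightarrow> bool" where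
  "simple_graph V E \<longleftrightarrow>
     (\<forall>u v. E u v \<longrightarrow> u \<in> V \<and> v \<in> V) \<and> (\<forall>u v. E u v \<longrightarrow> E v u) \<and> (\<forall>v. \<not> E v v)"

definition connected_graph :: "'a set \<Rightarrow> ('a \<Rightarrow> 'a \<Rightarrow> bool) \<Rightarrow> bool" where
  "connected_graph V E \<longleftrightarrow> (\<forall>u\<in>V. \<forall>v\<in>V. E\<^sup>*\<^sup>* u v)"

definition graph_automorphism :: "'a set \<Rightarrow> ('a \<Rightarrow> 'a \<Rightarrow> bool) \<Rightarrow> ('a \<Rightarrow> 'a) \<Rightarrow> bool" where
  "graph_automorphism V E \<gamma> \<longleftrightarrow>
     bij_betw \<gamma> V V \<and> (\<forall>u\<in>V. \<forall>v\<in>V. E (\<gamma> u) (\<gamma> v) \<longleftrightarrow> E u v)"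

definition is_identity_on :: "'a set \<Rightarrow> ('a \<Rightarrow> 'a) \<Rightarrow> bool" where
  "is_identity_on V \<gamma> \<longleftrightarrow> (\<forall>v\<in>V. \<gamma> v = v)"

definition preserves_vertex_colouring :: "'a set \<Rightarrow> ('a \<Rightarrow> 'c) \<Rightarrow> ('a \<Rightarrow> 'a) \<Rightarrow> bool" where
  "preserves_vertex_colouring V c \<gamma> \<longleftrightarrow> (\<forall>v\<in>V. c (\<gamma> v) = c v)"

definition preserves_edge_colouring ::
  "('a \<Rightarrow> 'a \<Rightarrow> bool) \<Rightarrow> ('a \<Rightarrow> 'a \<Rightarrow> 'c) \<Rightarrow> ('a \<Rightarrow> 'a) \<Rightarrow> bool" where
  "preserves_edge_colouring E c' \<gamma> \<longleftrightarrow> (\<forall>u v. E u v \<longrightarrow> c' (\<gamma> u) (\<gamma> v) = c' u v)"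

definition distinguishing_vertex_colouring ::
  "'a set \<Rightarrow> ('a \<Rightarrow> 'a \<Rightarrow> bool) \<Rightarrow> ('a \<Rightarrow> 'c) \<Rightarrow> bool" where
  "distinguishing_vertex_colouring V E c \<longleftrightarrow>
     (\<forall>\<gamma>. graph_automorphism V E \<gamma> \<and> preserves_vertex_colouring V c \<gamma> \<longrightarrow> is_identity_on V \<gamma>)"

definition canonical_edge_colouring :: "('a \<Rightarrow> 'c::ab_group_add) \<Rightarrow> 'a \<Rightarrow> 'a \<Rightarrow> 'c" where
  "canonical_edge_colouring c u v = c u + c v"

end

theory Submission
  imports Defs
begin

text \<open>If \<gamma> preserves the canonical edge colouring, the colour shift
  \<delta> v = c (\<gamma> v) - c v changes sign along every edge, since
  c (\<gamma> u) + c (\<gamma> v) = c u + c v. Hence if \<delta> vanishes at one vertex it vanishes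
  along every walk, so on all of a connected graph; then \<gamma> preserves c and,
  c being distinguishing, is the identity.\<close>

lemma colour_shift_negated_along_edge:
  fixes c :: "'a \<Rightarrow> 'c::ab_group_add"
  assumes "preserves_edge_colouring E (canonical_edge_colouring c) \<gamma>" and "E u v"
  shows "c (\<gamma> v) - c v = - (c (\<gamma> u) - c u)"
proof -
  have "c (\<gamma> u) + c (\<gamma> v) = c u + c v"
    using assms unfolding preserves_edge_colouring_def canonical_edge_colouring_def by blast
  then show ?thesis
    by (simp add: algebra_simps eq_diff_eq)
qed

lemma preserves_vertex_colouring_if_fixes_one_colour:
  fixes c :: "'a \<Rightarrow> 'c::ab_group_add"
  assumes "connected_graph V E"
    and "preserves_edge_colouring E (canonical_edge_colouring c) \<gamma>"
    and "v\<^sub>0 \<in> V" and "c (\<gamma> v\<^sub>0) = c v\<^sub>0"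
  shows "preserves_vertex_colouring V c \<gamma>"
  unfolding preserves_vertex_colouring_def
proof
  fix x assume "x \<in> V"
  with assms(1,3) have "E\<^sup>*\<^sup>* v\<^sub>0 x"
    unfolding connected_graph_def by blast
  then show "c (\<gamma> x) = c x"
  proof (induction rule: rtranclp_induct)
    case base
    show ?case using assms(4) .
  next
    case (step y z)
    then have "c (\<gamma> z) - c z = 0"
      using colour_shift_negated_along_edge[OF assms(2) step(2)] by simp
    then show ?case by simp
  qed
qed

theorem mainTheorem4:
  fixes V :: "'a set" and E :: "'a \<Rightarrow> 'a \<Rightarrow> bool"
    and c :: "'a \<Rightarrow> 'c::ab_group_add" and \<gamma> :: "'a \<Rightarrow> 'a"
  assumes "simple_graph V E"
    and "connected_graph V E"
    and "distinguishing_vertex_colouring V E c"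
    and "graph_automorphism V E \<gamma>"
    and "\<not> is_identity_on V \<gamma>"
    and "preserves_edge_colouring E (canonical_edge_colouring c) \<gamma>"
  shows "(\<forall>v\<in>V. c (\<gamma> v) \<noteq> c v) \<and> (\<forall>v\<in>V. \<gamma> v \<noteq> v)"
proof -
  have no_fixed_colour: "c (\<gamma> v) \<noteq> c v" if "v \<in> V" for v
  proof
    assume "c (\<gamma> v) = c v"
    with assms(2,6) \<open>v \<in> V\<close> have "preserves_vertex_colouring V c \<gamma>"
      by (rule preserves_vertex_colouring_if_fixes_one_colour)
    with assms(3,4) have "is_identity_on V \<gamma>"
      unfolding distinguishing_vertex_colouring_def by blast
    with assms(5) show False ..
  qed
  then show ?thesis by metis
qed

end
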